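(* There exists a large set of H-designs LH$(5,4u,4,3)$ for every positive integer $u$.
   Context: An H-design H$(n,g,k,t)$ is a triple $(Q,G,B)$ where $Q$ is a set of $ng$ points, $G$ is a partition of $Q$ into $n$ groups of size $g$, and $B$ is a set of $k$-subsets of $Q$ (blocks) such that each block meets each group in at most one point and any $t$ points from $t$ distinct groups lie in exactly one block. A large set of H-designs LH$(n,g,k,t)$ is a partition of the set of all $k$-subsets of $Q$ meeting each group of $G$ in at most one point into pairwise disjoint block sets, each of which forms (with $Q$ and $G$) an H-design H$(n,g,k,t)$. *)

theory Defs
  imports Main "HOL-Library.Disjoint_Sets"
begin

definition transverse :: "'a set set \<Rightarrow> 'a set \<Rightarrow> bool" where
  "transverse G S \<longleftrightarrow> (\<forall>X\<in>G. card (S \<inter> X) \<le> 1)"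

definition group_partition :: "nat \<Rightarrow> nat \<Rightarrow> 'a set \<Rightarrow> 'a set set \<Rightarrow> bool" where
  "group_partition n g Q G \<longleftrightarrow>
     finite Q \<and> card Q = n * g \<and> partition_on Q G \<and> card G = n \<and> (\<forall>X\<in>G. card X = g)"

definition transverse_subsets :: "nat \<Rightarrow> 'a set \<Rightarrow> 'a set set \<Rightarrow> 'a set set" where
  "transverse_subsets k Q G = {S. S \<subseteq> Q \<and> card S = k \<and> transverse G S}"

definition H_design :: "nat \<Rightarrow> nat \<Rightarrow> nat \<Rightarrow> nat \<Rightarrow> 'a set \<Rightarrow> 'a set set \<Rightarrow> 'a set set \<Rightarrow> bool" where
  "H_design n g k t Q G B \<longleftrightarrow>
     group_partition n g Q G \<and>
     B \<subseteq> transverse_subsets k Q G \<and>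
     (\<forall>T \<in> transverse_subsets t Q G. \<exists>!b. b \<in> B \<and> T \<subseteq> b)"

definition large_set_H :: "nat \<Rightarrow> nat \<Rightarrow> nat \<Rightarrow> nat \<Rightarrow> 'a set \<Rightarrow> 'a set set \<Rightarrow> 'a set set set \<Rightarrow> bool" where
  "large_set_H n g k t Q G L \<longleftrightarrow>
     group_partition n g Q G \<and>
     partition_on (transverse_subsets k Q G) L \<and>
     (\<forall>B\<in>L. H_design n g k t Q G B)"

end

(*
  Points are triples (i, x, z) in Z_5 x Z_4 x Z_u, the groups being the five values of i.
  A transverse 4-set S misses exactly one group j and is labelled by
  (c_j + sum_{p in S} w_j(i_p, x_p), sum_{p in S} z_p mod u) in F_2^3 x Z_u
  for fixed tables c and w; the block sets of the large set are the 8u fibres of this label.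
  A transverse triple T extends to a block by any of the 8u points of the two groups it
  misses, so it suffices that these extensions get pairwise distinct labels.  For two points
  in the same group this follows from the injectivity of x \<mapsto> w_j(i, x) and from the
  z-sum.  For points in the two different missed groups q and q', the missing group of the
  block switches between q' and q; a linear functional on F_2^3 that kills w_q'(q, -) and
  w_q(q', -) and does not distinguish w_q(i, -) from w_q'(i, -) for the other groups i
  still separates c_q from c_q', hence the labels differ.
*)

theory Submission
  imports Defs "HOL-Library.Z2" "HOL-Library.Product_Plus" "HOL-Number_Theory.Cong"
begin

lemma large_set_H_fibres:
  assumes partition: "group_partition n g Q G"
    and into: "f ` transverse_subsets k Q G \<subseteq> D"
    and nonempty: "transverse_subsets t Q G \<noteq> {}"
    and bij: "\<And>T. T \<in> transverse_subsets t Q G \<Longrightarrow>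
      bij_betw f {b \<in> transverse_subsets k Q G. T \<subseteq> b} D"
  shows "large_set_H n g k t Q G ((\<lambda>d. {b \<in> transverse_subsets k Q G. f b = d}) ` D)"
proof -
  let ?fibre = "\<lambda>d. {b \<in> transverse_subsets k Q G. f b = d}"
  have fibre_nonempty: "?fibre d \<noteq> {}" if "d \<in> D" for d
  proof -
    obtain T where "T \<in> transverse_subsets t Q G"
      using nonempty by blast
    then have "d \<in> f ` {b \<in> transverse_subsets k Q G. T \<subseteq> b}"
      using bij_betw_imp_surj_on[OF bij] \<open>d \<in> D\<close> by simp
    then show ?thesis
      by blast
  qed
  have "\<Union> (?fibre ` D) = transverse_subsets k Q G"
    using into by blast
  moreover have "disjoint (?fibre ` D)"
    by (rule disjointI) auto
  ultimately have "partition_on (transverse_subsets k Q G) (?fibre ` D)"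
    using fibre_nonempty by (auto simp: partition_on_def)
  moreover have "H_design n g k t Q G (?fibre d)" if "d \<in> D" for d
    unfolding H_design_def
  proof (intro conjI ballI)
    fix T assume T: "T \<in> transverse_subsets t Q G"
    have "d \<in> f ` {b \<in> transverse_subsets k Q G. T \<subseteq> b}"
      using bij_betw_imp_surj_on[OF bij[OF T]] \<open>d \<in> D\<close> by simp
    then obtain b where "b \<in> transverse_subsets k Q G" "T \<subseteq> b" "f b = d"
      by blast
    moreover have "b' = b" if "b' \<in> ?fibre d" "T \<subseteq> b'" for b'
      using inj_onD[OF bij_betw_imp_inj_on[OF bij[OF T]], of b' b] that calculation by simp
    ultimately show "\<exists>!b. b \<in> ?fibre d \<and> T \<subseteq> b" by blast
  qed (use partition in auto)
  ultimately show ?thesis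
    unfolding large_set_H_def using partition by blast
qed

lemma div_eq_iff_bounds: "(m::nat) > 0 \<Longrightarrow> p div m = i \<longleftrightarrow> i * m \<le> p \<and> p < Suc i * m"
  by (meson div_less_iff_less_mult le_less_Suc_eq less_eq_div_iff_mult_less_eq nat_le_linear)

(* The point p stands for (group_index u p, p mod 4, zcoord u p) in Z_5 x Z_4 x Z_u,
   see group_index_zcoord_mod_eq. *)
definition points :: "nat \<Rightarrow> nat set" where
  "points u = {..<20 * u}"

definition group_index :: "nat \<Rightarrow> nat \<Rightarrow> nat" where
  "group_index u p = p div (4 * u)"

definition zcoord :: "nat \<Rightarrow> nat \<Rightarrow> nat" where
  "zcoord u p = p mod (4 * u) div 4"

lemma zcoord_less: "u > 0 \<Longrightarrow> zcoord u p < u"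
  unfolding zcoord_def by (simp add: less_mult_imp_div_less mult.commute)

lemma group_index_zcoord_mod_eq: "group_index u p * (4 * u) + 4 * zcoord u p + p mod 4 = p"
proof -
  have "p mod (4 * u) mod 4 = p mod 4"
    by (simp add: mod_mod_cancel)
  then show ?thesis
    unfolding group_index_def zcoord_def
    using div_mult_mod_eq[of p "4 * u"] mult_div_mod_eq[of 4 "p mod (4 * u)"] by linarith
qed

definition point_group :: "nat \<Rightarrow> nat \<Rightarrow> nat set" where
  "point_group u i = {p \<in> points u. group_index u p = i}"

definition groups :: "nat \<Rightarrow> nat set set" where
  "groups u = point_group u ` {..<5}"

lemma finite_points [simp]: "finite (points u)"
  by (simp add: points_def)

lemma group_index_less_5: "p \<in> points u \<Longrightarrow> group_index u p < 5"
  unfolding points_def group_index_def by (simp add: less_mult_imp_div_less)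

lemma point_group_eq_interval:
  assumes "u > 0" "i < 5"
  shows "point_group u i = {i * (4 * u)..<i * (4 * u) + 4 * u}"
proof -
  have group_index_eq_iff: "group_index u p = i \<longleftrightarrow> i * (4 * u) \<le> p \<and> p < Suc i * (4 * u)" for p
    unfolding group_index_def using \<open>u > 0\<close> by (simp add: div_eq_iff_bounds)
  have group_end: "i * (4 * u) + 4 * u \<le> 20 * u"
    using \<open>i < 5\<close> by simp
  show ?thesis
    unfolding point_group_def points_def
    by (auto simp: group_index_eq_iff intro: less_le_trans[OF _ group_end])
qed

lemma group_partition_points:
  assumes "u > 0"
  shows "group_partition 5 (4 * u) (points u) (groups u)"
proof -
  have first_point: "i * (4 * u) \<in> point_group u i" if "i < 5" for i
    using point_group_eq_interval[OF assms that] assms by simp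
  have inj: "inj_on (point_group u) {..<5}"
  proof (rule inj_onI)
    fix i j assume "i \<in> {..<5}" "j \<in> {..<5}" "point_group u i = point_group u j"
    then have "i * (4 * u) \<in> point_group u j" using first_point by auto
    then show "i = j" using first_point \<open>i \<in> {..<5}\<close> by (auto simp: point_group_def)
  qed
  moreover have "partition_on (points u) (groups u)"
    unfolding partition_on_def disjoint_def groups_def
    using first_point group_index_less_5 by (auto simp: point_group_def disjnt_def)
  moreover have "card (groups u) = 5"
    unfolding groups_def using inj by (simp add: card_image)
  ultimately show ?thesis
    unfolding group_partition_def using assms
    by (auto simp: groups_def point_group_eq_interval points_def)
qed

lemma transverse_groups_iff_inj_on:
  assumes "S \<subseteq> points u"
  shows "transverse (groups u) S \<longleftrightarrow> inj_on (group_index u) S"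
proof -
  have "finite S"
    using assms finite_subset unfolding points_def by blast
  then have "transverse (groups u) S \<longleftrightarrow>
      (\<forall>i<5. \<forall>p\<in>S. \<forall>p'\<in>S. group_index u p = i \<longrightarrow> group_index u p' = i \<longrightarrow> p = p')"
    unfolding transverse_def groups_def point_group_def using assms
    by (auto simp: card_le_Suc0_iff_eq Int_def)
  then show ?thesis
    using assms group_index_less_5 unfolding inj_on_def by blast
qed

lemma transverse_subsets_points:
  "S \<in> transverse_subsets k (points u) (groups u) \<longleftrightarrow>
     S \<subseteq> points u \<and> card S = k \<and> inj_on (group_index u) S"
  unfolding transverse_subsets_def using transverse_groups_iff_inj_on by blast

lemma transverse_subset_finite:
  "S \<in> transverse_subsets k (points u) (groups u) \<Longrightarrow> finite S"
  unfolding transverse_subsets_points using finite_points by (blast intro: finite_subset)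

definition free_points :: "nat \<Rightarrow> nat set \<Rightarrow> nat set" where
  "free_points u T = {p \<in> points u. group_index u p \<notin> group_index u ` T}"

lemma card_groups_missed:
  assumes "T \<in> transverse_subsets 3 (points u) (groups u)"
  shows "card ({..<5} - group_index u ` T) = 2"
proof -
  have "group_index u ` T \<subseteq> {..<5}" "card (group_index u ` T) = 3"
    using assms group_index_less_5 by (auto simp: transverse_subsets_points card_image)
  then show ?thesis
    by (simp add: card_Diff_subset finite_subset)
qed

lemma card_free_points:
  assumes "u > 0" "T \<in> transverse_subsets 3 (points u) (groups u)"
  shows "card (free_points u T) = 8 * u"
proof -
  let ?M = "{..<5} - group_index u ` T"
  have "free_points u T = (\<Union>i\<in>?M. point_group u i)"
    unfolding free_points_def point_group_def using group_index_less_5 by auto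
  also have "card \<dots> = (\<Sum>i\<in>?M. card (point_group u i))"
    by (rule card_UN_disjoint) (auto simp: point_group_def points_def)
  also have "\<dots> = (\<Sum>i\<in>?M. 4 * u)"
    by (intro sum.cong) (auto simp: point_group_eq_interval[OF assms(1)])
  finally show ?thesis
    using card_groups_missed[OF assms(2)] by simp
qed

lemma extensions_of_triple:
  assumes T: "T \<in> transverse_subsets 3 (points u) (groups u)"
  shows "{b \<in> transverse_subsets 4 (points u) (groups u). T \<subseteq> b} =
    (\<lambda>p. insert p T) ` free_points u T"
proof (intro equalityI subsetI)
  fix b assume "b \<in> {b \<in> transverse_subsets 4 (points u) (groups u). T \<subseteq> b}"
  then have b: "b \<subseteq> points u" "card b = 4" "inj_on (group_index u) b" "T \<subseteq> b"
    by (auto simp: transverse_subsets_points)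
  have "finite T" "card T = 3"
    using T transverse_subset_finite by (auto simp: transverse_subsets_points)
  then have "card (b - T) = 1"
    using b by (simp add: card_Diff_subset)
  then obtain p where p: "b - T = {p}"
    by (rule card_1_singletonE)
  then have "b = insert p T" "p \<notin> T"
    using b(4) by auto
  moreover have "p \<in> free_points u T"
    using b p \<open>p \<notin> T\<close> unfolding free_points_def \<open>b = insert p T\<close> by auto
  ultimately show "b \<in> (\<lambda>p. insert p T) ` free_points u T"
    by blast
next
  fix b assume "b \<in> (\<lambda>p. insert p T) ` free_points u T"
  then obtain p where p: "p \<in> free_points u T" and b: "b = insert p T"
    by blast
  have "p \<notin> T"
    using p by (auto simp: free_points_def)
  moreover have "finite T" "card T = 3"
    using T transverse_subset_finite by (auto simp: transverse_subsets_points)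
  ultimately show "b \<in> {b \<in> transverse_subsets 4 (points u) (groups u). T \<subseteq> b}"
    using T p unfolding b by (auto simp: transverse_subsets_points free_points_def)
qed

definition missing_group :: "nat \<Rightarrow> nat set \<Rightarrow> nat" where
  "missing_group u S = the_elem ({..<5} - group_index u ` S)"

lemma groups_missed_by_triple:
  assumes T: "T \<in> transverse_subsets 3 (points u) (groups u)" and p: "p \<in> free_points u T"
  shows "{..<5} - group_index u ` T = {group_index u p, missing_group u (insert p T)}"
    and "missing_group u (insert p T) \<noteq> group_index u p"
proof -
  let ?M = "{..<5} - group_index u ` T"
  have "group_index u p \<in> ?M"
    using p group_index_less_5 by (auto simp: free_points_def)
  then have "card (?M - {group_index u p}) = 1"
    using card_groups_missed[OF T] by simp
  then obtain j where j: "?M - {group_index u p} = {j}"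
    by (rule card_1_singletonE)
  moreover have "{..<5} - group_index u ` insert p T = ?M - {group_index u p}"
    by auto
  ultimately have "missing_group u (insert p T) = j"
    unfolding missing_group_def by simp
  then show "?M = {group_index u p, missing_group u (insert p T)}"
    and "missing_group u (insert p T) \<noteq> group_index u p"
    using j \<open>group_index u p \<in> ?M\<close> by auto
qed

(* bit is the field F_2, so vec3 is F_2^3; vectors are given by their binary codes below 8. *)
type_synonym vec3 = "bit \<times> bit \<times> bit"

definition vec3_of_nat :: "nat \<Rightarrow> vec3" where
  "vec3_of_nat n = (of_bool (odd n), of_bool (odd (n div 2)), of_bool (odd (n div 4)))"

definition dot3 :: "vec3 \<Rightarrow> vec3 \<Rightarrow> bit" where
  "dot3 v w = fst v * fst w + fst (snd v) * fst (snd w) + snd (snd v) * snd (snd w)"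

lemma dot3_add: "dot3 l (v + w) = dot3 l v + dot3 l w"
  unfolding dot3_def fst_add snd_add
  by (simp only: distrib_left ac_simps)

lemma dot3_sum: "dot3 l (\<Sum>x\<in>A. f x) = (\<Sum>x\<in>A. dot3 l (f x))"
proof -
  have "dot3 l 0 = 0"
    by (simp add: dot3_def)
  then show ?thesis
    using sum_comp_morphism[of "dot3 l" f A] by (simp add: dot3_add o_def)
qed

(* weight j i x, offset j and separator d e are the w_j(i, x), c_j and the functional
   for the groups d, e of the header. *)
definition weight_table :: "nat list list list" where
  "weight_table =
    [[[0,0,0,0],[0,2,5,7],[0,3,1,2],[0,1,6,7],[0,3,6,5]],
     [[0,5,2,7],[0,0,0,0],[0,3,4,7],[0,6,3,5],[0,6,4,2]],
     [[0,2,1,3],[0,3,4,7],[0,0,0,0],[0,1,4,5],[0,2,7,5]],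
     [[0,6,1,7],[0,3,5,6],[0,5,1,4],[0,0,0,0],[0,3,7,4]],
     [[0,5,6,3],[0,4,6,2],[0,5,2,7],[0,4,3,7],[0,0,0,0]]]"

definition weight :: "nat \<Rightarrow> nat \<Rightarrow> nat \<Rightarrow> vec3" where
  "weight j i x = vec3_of_nat (weight_table ! j ! i ! x)"

definition offset :: "nat \<Rightarrow> vec3" where
  "offset j = vec3_of_nat ([4,7,1,6,0] ! j)"

definition separator_table :: "nat list list" where
  "separator_table = [[0,5,4,6,7],[5,0,3,7,1],[4,3,0,2,5],[6,7,2,0,3],[7,1,5,3,0]]"

definition separator :: "nat \<Rightarrow> nat \<Rightarrow> vec3" where
  "separator d e = vec3_of_nat (separator_table ! d ! e)"

lemma less_5_cases: "(j::nat) < 5 \<longleftrightarrow> j = 0 \<or> j = 1 \<or> j = 2 \<or> j = 3 \<or> j = 4"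
  by auto

lemma less_4_cases: "(x::nat) < 4 \<longleftrightarrow> x = 0 \<or> x = 1 \<or> x = 2 \<or> x = 3"
  by auto

lemma weight_inj:
  "j < 5 \<Longrightarrow> i < 5 \<Longrightarrow> i \<noteq> j \<Longrightarrow> x < 4 \<Longrightarrow> y < 4 \<Longrightarrow> weight j i x = weight j i y \<Longrightarrow> x = y"
  unfolding less_5_cases less_4_cases
  by (elim disjE) (simp_all add: weight_def weight_table_def vec3_of_nat_def)

lemma separator_sym: "d < 5 \<Longrightarrow> e < 5 \<Longrightarrow> separator d e = separator e d"
  unfolding less_5_cases
  by (elim disjE) (simp_all add: separator_def separator_table_def)

lemma separator_offset:
  "d < 5 \<Longrightarrow> e < 5 \<Longrightarrow> d \<noteq> e \<Longrightarrow> dot3 (separator d e) (offset d) \<noteq> dot3 (separator d e) (offset e)"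
  unfolding less_5_cases
  by (elim disjE)
    (simp_all add: offset_def vec3_of_nat_def separator_def separator_table_def dot3_def)

lemma separator_weight_crossed:
  "d < 5 \<Longrightarrow> e < 5 \<Longrightarrow> d \<noteq> e \<Longrightarrow> x < 4 \<Longrightarrow> dot3 (separator d e) (weight e d x) = 0"
  unfolding less_5_cases less_4_cases
  by (elim disjE)
    (simp_all add: weight_def weight_table_def vec3_of_nat_def
      separator_def separator_table_def dot3_def)

lemma separator_weight_other:
  "d < 5 \<Longrightarrow> e < 5 \<Longrightarrow> i < 5 \<Longrightarrow> x < 4 \<Longrightarrow> i \<noteq> d \<Longrightarrow> i \<noteq> e \<Longrightarrow>
    dot3 (separator d e) (weight d i x) = dot3 (separator d e) (weight e i x)"
  unfolding less_5_cases less_4_cases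
  by (elim disjE)
    (simp_all add: weight_def weight_table_def vec3_of_nat_def
      separator_def separator_table_def dot3_def)

definition label :: "nat \<Rightarrow> nat set \<Rightarrow> vec3 \<times> nat" where
  "label u S =
    (offset (missing_group u S) + (\<Sum>p\<in>S. weight (missing_group u S) (group_index u p) (p mod 4)),
     (\<Sum>p\<in>S. zcoord u p) mod u)"

lemma label_inj_same_group:
  assumes u: "u > 0" and T: "T \<in> transverse_subsets 3 (points u) (groups u)"
    and p: "p \<in> free_points u T" and p': "p' \<in> free_points u T"
    and same_group: "group_index u p = group_index u p'"
    and eq: "label u (insert p T) = label u (insert p' T)"
  shows "p = p'"
proof -
  have T_facts: "finite T" "p \<notin> T" "p' \<notin> T"
    using T p p' transverse_subset_finite by (auto simp: free_points_def)
  define j where "j = missing_group u (insert p T)"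
  have j': "missing_group u (insert p' T) = j"
    unfolding j_def missing_group_def using same_group by simp
  have "j < 5" "j \<noteq> group_index u p"
    using groups_missed_by_triple[OF T p] unfolding j_def by auto
  have "weight j (group_index u p) (p mod 4) = weight j (group_index u p') (p' mod 4)"
    using arg_cong[OF eq, of fst] T_facts j' by (simp add: label_def flip: j_def)
  moreover have "group_index u p < 5"
    using p group_index_less_5 by (simp add: free_points_def)
  ultimately have x: "p mod 4 = p' mod 4"
    using weight_inj[of j "group_index u p" "p mod 4" "p' mod 4"]
      \<open>j < 5\<close> \<open>j \<noteq> group_index u p\<close> same_group
    by auto
  have "[zcoord u p + (\<Sum>t\<in>T. zcoord u t) = zcoord u p' + (\<Sum>t\<in>T. zcoord u t)] (mod u)"
    using arg_cong[OF eq, of snd] T_facts by (simp add: label_def cong_def)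
  then have z: "zcoord u p = zcoord u p'"
    using cong_add_rcancel_nat cong_less_modulus_unique_nat zcoord_less[OF u] by blast
  have "p = group_index u p * (4 * u) + 4 * zcoord u p + p mod 4"
    by (rule group_index_zcoord_mod_eq[symmetric])
  also have "\<dots> = group_index u p' * (4 * u) + 4 * zcoord u p' + p' mod 4"
    using same_group x z by simp
  also have "\<dots> = p'"
    by (rule group_index_zcoord_mod_eq)
  finally show ?thesis .
qed

lemma label_neq_other_group:
  assumes T: "T \<in> transverse_subsets 3 (points u) (groups u)"
    and p: "p \<in> free_points u T" and p': "p' \<in> free_points u T"
    and other_group: "group_index u p \<noteq> group_index u p'"
  shows "label u (insert p T) \<noteq> label u (insert p' T)"
proof
  assume eq: "label u (insert p T) = label u (insert p' T)"
  define q q' where "q = group_index u p" and "q' = group_index u p'"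
  have T_facts: "finite T" "p \<notin> T" "p' \<notin> T"
    using T p p' transverse_subset_finite by (auto simp: free_points_def)
  have missing: "missing_group u (insert p T) = q'" "missing_group u (insert p' T) = q"
    using groups_missed_by_triple[OF T p] groups_missed_by_triple[OF T p'] other_group
    unfolding q_def q'_def by (metis doubleton_eq_iff)+
  have "q < 5" "q' < 5"
    using p p' group_index_less_5 unfolding q_def q'_def free_points_def by auto
  have "q \<notin> group_index u ` T" "q' \<notin> group_index u ` T"
    using p p' unfolding q_def q'_def free_points_def by auto
  then have T_groups: "group_index u t < 5" "group_index u t \<noteq> q" "group_index u t \<noteq> q'"
    if "t \<in> T" for t
    using that T group_index_less_5 by (auto simp: transverse_subsets_points)
  define l where "l = separator q q'"
  have "dot3 l (fst (label u (insert p T)))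
      = dot3 l (offset q') + (\<Sum>t\<in>T. dot3 l (weight q' (group_index u t) (t mod 4)))"
    using separator_weight_crossed[OF \<open>q < 5\<close> \<open>q' < 5\<close>] other_group T_facts missing(1)
    unfolding label_def l_def q_def q'_def by (simp add: dot3_add dot3_sum)
  moreover have "dot3 l (fst (label u (insert p' T)))
      = dot3 l (offset q) + (\<Sum>t\<in>T. dot3 l (weight q (group_index u t) (t mod 4)))"
    using separator_weight_crossed[OF \<open>q' < 5\<close> \<open>q < 5\<close>] separator_sym[OF \<open>q < 5\<close> \<open>q' < 5\<close>]
      other_group T_facts missing(2)
    unfolding label_def l_def q_def q'_def by (simp add: dot3_add dot3_sum)
  moreover have "(\<Sum>t\<in>T. dot3 l (weight q' (group_index u t) (t mod 4)))
      = (\<Sum>t\<in>T. dot3 l (weight q (group_index u t) (t mod 4)))"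
    using separator_weight_other[OF \<open>q < 5\<close> \<open>q' < 5\<close>] T_groups unfolding l_def
    by (intro sum.cong) auto
  ultimately have "dot3 l (offset q') = dot3 l (offset q)"
    using eq by (metis add_right_cancel)
  then show False
    using separator_offset[OF \<open>q < 5\<close> \<open>q' < 5\<close>] other_group unfolding l_def q_def q'_def by auto
qed

lemma UNIV_bit: "(UNIV :: bit set) = {0, 1}"
  by (auto intro: bit.exhaust)

lemma finite_label_range: "finite (UNIV \<times> {..<u} :: (vec3 \<times> nat) set)"
  by (simp flip: UNIV_Times_UNIV add: UNIV_bit)

lemma card_label_range: "card (UNIV \<times> {..<u} :: (vec3 \<times> nat) set) = 8 * u"
  by (simp flip: UNIV_Times_UNIV add: UNIV_bit card_cartesian_product)

lemma bij_betw_label: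
  assumes u: "u > 0" and T: "T \<in> transverse_subsets 3 (points u) (groups u)"
  shows "bij_betw (label u) {b \<in> transverse_subsets 4 (points u) (groups u). T \<subseteq> b} (UNIV \<times> {..<u})"
proof -
  have inj: "inj_on (label u \<circ> (\<lambda>p. insert p T)) (free_points u T)"
  proof (rule inj_onI)
    fix p p' assume "p \<in> free_points u T" "p' \<in> free_points u T"
      and "(label u \<circ> (\<lambda>p. insert p T)) p = (label u \<circ> (\<lambda>p. insert p T)) p'"
    then show "p = p'"
      using label_inj_same_group[OF u T] label_neq_other_group[OF T]
      by (cases "group_index u p = group_index u p'") auto
  qed
  have "label u ` (\<lambda>p. insert p T) ` free_points u T \<subseteq> UNIV \<times> {..<u}"
    using u by (auto simp: label_def)
  moreover have "card (label u ` (\<lambda>p. insert p T) ` free_points u T) = 8 * u"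
    using card_image[OF inj] card_free_points[OF u T] by (simp add: image_comp)
  ultimately have "label u ` (\<lambda>p. insert p T) ` free_points u T = UNIV \<times> {..<u}"
    using card_label_range finite_label_range by (intro card_subset_eq) simp_all
  then show ?thesis
    unfolding extensions_of_triple[OF T] using inj_on_imageI[OF inj]
    by (rule bij_betw_imageI[rotated])
qed

theorem lemma11:
  fixes u :: nat
  assumes "u > 0"
  shows "\<exists>(Q :: nat set) G L. large_set_H 5 (4 * u) 4 3 Q G L"
proof -
  have "group_index u 0 = 0" "group_index u (4 * u) = 1" "group_index u (8 * u) = 2"
    using assms by (simp_all add: group_index_def)
  then have "{0, 4 * u, 8 * u} \<in> transverse_subsets 3 (points u) (groups u)"
    unfolding transverse_subsets_points using assms by (simp add: points_def)
  then have "large_set_H 5 (4 * u) 4 3 (points u) (groups u)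
      ((\<lambda>d. {b \<in> transverse_subsets 4 (points u) (groups u). label u b = d}) ` (UNIV \<times> {..<u}))"
    using assms by (intro large_set_H_fibres group_partition_points bij_betw_label)
      (auto simp: label_def)
  then show ?thesis
    by blast
qed

end
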